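(* Let $O\in\mathrm{O}(2S)$, let $1\le i\le S$ and $1\le j\le 2S$. Then there exist $W\in\mathrm{SpO}(2S,\mathbb{R})$ and a real number $\lambda\neq 0$ such that $(OW)_{l,2i-1}=\lambda\,(OW)_{l,2i}$ for every row index $l\neq j$; i.e. columns $2i-1$ and $2i$ of $OW$ are proportional with the same nonzero constant in all rows except row $j$.
   Context: Coordinates of $\mathbb{R}^{2S}$ are ordered as $(q_1,p_1,\dots,q_S,p_S)$. Let $\Omega=\bigoplus_{i=1}^S\begin{pmatrix}0&1\\-1&0\end{pmatrix}$. $\mathrm{O}(2S)$ is the orthogonal group and $\mathrm{SpO}(2S,\mathbb{R})$ is the group of real $2S\times2S$ matrices $W$ that are orthogonal and symplectic ($W^T\Omega W=\Omega$). *)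

theory Defs
  imports "Jordan_Normal_Form.Matrix"
begin

text \<open>Matrices are 0-indexed. Coordinates (q_1,p_1,...,q_S,p_S) correspond to
indices 0,1,...,2S-1; q_k has index 2k-2, p_k has index 2k-1.\<close>

definition Omega :: "nat \<Rightarrow> real mat" where
  "Omega S = mat (2*S) (2*S) (\<lambda>(a,b).
     if even a \<and> b = a + 1 then 1
     else if odd a \<and> a = b + 1 then -1 else 0)"

definition orthogonal_mat :: "nat \<Rightarrow> real mat \<Rightarrow> bool" where
  "orthogonal_mat n Q \<longleftrightarrow> Q \<in> carrier_mat n n \<and> transpose_mat Q * Q = 1\<^sub>m n"

definition SpO :: "nat \<Rightarrow> real mat set" where
  "SpO S = {W. orthogonal_mat (2*S) W \<and> transpose_mat W * Omega S * W = Omega S}"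

end

theory Submission imports Defs "Jordan_Normal_Form.Determinant" begin

text \<open>Orthogonal symplectic matrices are the unitary matrices of \<open>\<complex>\<^sup>S\<close> for the complex
structure given by \<open>Omega\<close>, so they act transitively on the unit sphere: a complex
rank-one reflection sends any unit vector to any other. Take \<open>W \<in> SpO S\<close> sending
\<open>(e(2i-1) + e(2i))/\<surd>2\<close> to the \<open>j\<close>-th row of \<open>Q\<close>; then \<open>QW\<close> sends it to \<open>e(j)\<close>, so columns
\<open>2i-1\<close> and \<open>2i\<close> of \<open>QW\<close> sum to zero off row \<open>j\<close>, and the constant \<open>-1\<close> works.\<close>

lemma Omega_entry:
  "a < 2*S \<Longrightarrow> b < 2*S \<Longrightarrow> Omega S $$ (a,b) =
     (if even a \<and> b = a + 1 then 1 else if odd a \<and> a = b + 1 then -1 else 0)"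
  by (simp add: Omega_def)

lemma Omega_carrier [simp]: "Omega S \<in> carrier_mat (2*S) (2*S)"
  by (simp add: Omega_def)

definition Omega_app :: "(nat \<Rightarrow> real) \<Rightarrow> nat \<Rightarrow> real" where
  "Omega_app f m = (if even m then f (Suc m) else - f (m - 1))"

lemma Omega_app_Omega_app [simp]: "Omega_app (Omega_app f) m = - f m"
  by (cases "even m") (auto simp: Omega_app_def)

lemma sum_Omega_mult:
  assumes "m < 2*S"
  shows "(\<Sum>l<2*S. Omega S $$ (m,l) * f l) = Omega_app f m"
proof (cases "even m")
  case True
  with assms have "Suc m < 2*S" by presburger
  moreover have "(\<Sum>l<2*S. Omega S $$ (m,l) * f l) = (\<Sum>l<2*S. if l = Suc m then f (Suc m) else 0)"
    using assms True by (intro sum.cong) (auto simp: Omega_entry)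
  ultimately show ?thesis using True by (simp add: Omega_app_def)
next
  case False
  with assms have "m - 1 < 2*S" by presburger
  moreover have "(\<Sum>l<2*S. Omega S $$ (m,l) * f l) = (\<Sum>l<2*S. if l = m - 1 then - f (m - 1) else 0)"
    using assms False by (intro sum.cong) (auto simp: Omega_entry)
  ultimately show ?thesis using False by (simp add: Omega_app_def)
qed

lemma sum_mult_Omega:
  assumes "k < 2*S"
  shows "(\<Sum>l<2*S. f l * Omega S $$ (l,k)) = - Omega_app f k"
proof (cases "even k")
  case True
  with assms have "Suc k < 2*S" by presburger
  moreover have "(\<Sum>l<2*S. f l * Omega S $$ (l,k)) = (\<Sum>l<2*S. if l = Suc k then - f (Suc k) else 0)"
    using assms True by (intro sum.cong) (auto simp: Omega_entry)
  ultimately show ?thesis using True by (simp add: Omega_app_def)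
next
  case False
  with assms have "k - 1 < 2*S" by presburger
  moreover have "(\<Sum>l<2*S. f l * Omega S $$ (l,k)) = (\<Sum>l<2*S. if l = k - 1 then f (k - 1) else 0)"
    using assms False by (intro sum.cong) (auto simp: Omega_entry)
  ultimately show ?thesis using False by (simp add: Omega_app_def)
qed

lemma sum_mult_Omega_app_antisym:
  "(\<Sum>l<2*S. f l * Omega_app g l) = - (\<Sum>l<2*S. Omega_app f l * g l)"
proof -
  have "(\<Sum>l<2*S. f l * Omega_app g l) = (\<Sum>l<2*S. \<Sum>k<2*S. f l * Omega S $$ (l,k) * g k)"
    by (intro sum.cong refl) (simp add: sum_Omega_mult[symmetric] sum_distrib_left mult.assoc)
  also have "\<dots> = (\<Sum>k<2*S. \<Sum>l<2*S. f l * Omega S $$ (l,k) * g k)"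
    by (rule sum.swap)
  also have "\<dots> = (\<Sum>k<2*S. - Omega_app f k * g k)"
    by (intro sum.cong refl) (simp add: sum_mult_Omega[symmetric] sum_distrib_right)
  finally show ?thesis by (simp add: sum_negf)
qed

lemma sum_mult_Omega_app_self: "(\<Sum>l<2*S. f l * Omega_app f l) = 0"
  using sum_mult_Omega_app_antisym[where S=S and f=f and g=f] by (simp add: mult.commute)

lemma sum_Omega_app_square: "(\<Sum>l<2*S. Omega_app f l * Omega_app f l) = (\<Sum>l<2*S. f l * f l)"
  using sum_mult_Omega_app_antisym[where S=S and f="Omega_app f" and g=f] by (simp add: sum_negf)

lemma SpO_if_orthogonal_commutes_Omega:
  assumes "orthogonal_mat (2*S) W" and comm: "Omega S * W = W * Omega S"
  shows "W \<in> SpO S"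
proof -
  have W: "W \<in> carrier_mat (2*S) (2*S)" and WTW: "transpose_mat W * W = 1\<^sub>m (2*S)"
    using assms(1) by (auto simp: orthogonal_mat_def)
  have "transpose_mat W * Omega S * W = transpose_mat W * (W * Omega S)"
    using W by (simp add: assoc_mult_mat[of _ "2*S" "2*S" _ "2*S" _ "2*S"] comm)
  also have "\<dots> = Omega S"
    using W WTW by (simp add: assoc_mult_mat[symmetric, of _ "2*S" "2*S" _ "2*S" _ "2*S"] Omega_def)
  finally show ?thesis using assms(1) by (simp add: SpO_def)
qed

text \<open>The complex rank-one map \<open>x \<mapsto> x + \<gamma> \<langle>w, x\<rangle> w\<close> with \<open>\<gamma> = \<alpha> + i\<beta>\<close>, where
\<open>Omega_app\<close> is multiplication by \<open>i\<close> and \<open>\<langle>w, x\<rangle> = w \<bullet> x + i (Omega_app w \<bullet> x)\<close>.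
It is unitary iff \<open>|1 + \<gamma> |w|\<^sup>2| = 1\<close>, i.e. \<open>2\<alpha> + (\<alpha>\<^sup>2 + \<beta>\<^sup>2) |w|\<^sup>2 = 0\<close>.\<close>
definition unitary_reflection :: "nat \<Rightarrow> (nat \<Rightarrow> real) \<Rightarrow> real \<Rightarrow> real \<Rightarrow> real mat" where
  "unitary_reflection S w \<alpha> \<beta> = mat (2*S) (2*S) (\<lambda>(m,k). (if m = k then 1 else 0)
     + w m * (\<alpha> * w k - \<beta> * Omega_app w k) + Omega_app w m * (\<alpha> * Omega_app w k + \<beta> * w k))"

lemma unitary_reflection_orthogonal:
  assumes "(\<Sum>l<2*S. w l * w l) * (\<alpha>\<^sup>2 + \<beta>\<^sup>2) = - 2 * \<alpha>"
  shows "orthogonal_mat (2*S) (unitary_reflection S w \<alpha> \<beta>)"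
proof -
  define n where "n = 2*S"
  define u where "u = Omega_app w"
  define d where "d = (\<Sum>l<n. w l * w l)"
  define A where "A k = \<alpha> * w k - \<beta> * u k" for k
  define B where "B k = \<alpha> * u k + \<beta> * w k" for k
  define F where "F m k = (if m = k then 1 else 0) + w m * A k + u m * B k" for m k
  have W: "unitary_reflection S w \<alpha> \<beta> = mat n n (\<lambda>(m,k). F m k)"
    by (simp add: unitary_reflection_def F_def A_def B_def u_def n_def)
  have wu: "(\<Sum>l<n. w l * u l) = 0" and uu: "(\<Sum>l<n. u l * u l) = d"
    by (simp_all add: u_def n_def d_def sum_mult_Omega_app_self sum_Omega_app_square)
  have "transpose_mat (mat n n (\<lambda>(m,k). F m k)) * mat n n (\<lambda>(m,k). F m k) = 1\<^sub>m n"
  proof (rule eq_matI)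
    fix m k assume "m < dim_row (1\<^sub>m n :: real mat)" "k < dim_col (1\<^sub>m n :: real mat)"
    then have mk: "m < n" "k < n" by auto
    have delta: "(\<Sum>l<n. if l = m \<and> l = k then 1 else 0) = (if m = k then 1 else (0::real))"
      using mk by (cases "m = k") (auto intro: sum.neutral)
    have "(transpose_mat (mat n n (\<lambda>(m,k). F m k)) * mat n n (\<lambda>(m,k). F m k)) $$ (m,k)
        = (\<Sum>l<n. F l m * F l k)"
      using mk by (simp add: scalar_prod_def atLeast0LessThan)
    also have "\<dots> = (\<Sum>l<n. (if l = m \<and> l = k then 1 else 0)
        + (if l = m then w l * A k + u l * B k else 0)
        + (if l = k then w l * A m + u l * B m else 0)
        + (A m * A k) * (w l * w l) + (A m * B k + B m * A k) * (w l * u l)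
        + (B m * B k) * (u l * u l))"
      by (intro sum.cong refl) (auto simp: F_def algebra_simps)
    also have "\<dots> = (if m = k then 1 else 0) + (w m * A k + u m * B k) + (w k * A m + u k * B m)
        + (A m * A k) * d + (B m * B k) * d"
      using mk by (simp add: sum.distrib sum_distrib_left[symmetric] d_def wu uu delta)
    also have "\<dots> = (if m = k then 1 else 0)
        + (2 * \<alpha> + d * (\<alpha>\<^sup>2 + \<beta>\<^sup>2)) * (w m * w k + u m * u k)"
      unfolding A_def B_def by (simp add: algebra_simps power2_eq_square)
    also have "\<dots> = 1\<^sub>m n $$ (m,k)"
      using assms mk by (simp add: d_def n_def)
    finally show "(transpose_mat (mat n n (\<lambda>(m,k). F m k)) * mat n n (\<lambda>(m,k). F m k)) $$ (m,k)
        = 1\<^sub>m n $$ (m,k)" .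
  qed auto
  then show ?thesis by (simp add: orthogonal_mat_def W n_def)
qed

lemma unitary_reflection_commutes_Omega:
  "Omega S * unitary_reflection S w \<alpha> \<beta> = unitary_reflection S w \<alpha> \<beta> * Omega S"
proof (rule eq_matI)
  fix m k assume "m < dim_row (unitary_reflection S w \<alpha> \<beta> * Omega S)"
    "k < dim_col (unitary_reflection S w \<alpha> \<beta> * Omega S)"
  then have mk: "m < 2*S" "k < 2*S" by (auto simp: Omega_def unitary_reflection_def)
  define F where "F m k = (if m = k then 1 else 0) + w m * (\<alpha> * w k - \<beta> * Omega_app w k)
    + Omega_app w m * (\<alpha> * Omega_app w k + \<beta> * w k)" for m k
  have "(Omega S * unitary_reflection S w \<alpha> \<beta>) $$ (m,k) = (\<Sum>l<2*S. Omega S $$ (m,l) * F l k)"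
    using mk by (simp add: F_def scalar_prod_def atLeast0LessThan unitary_reflection_def Omega_def)
  also have "\<dots> = Omega_app (\<lambda>l. F l k) m"
    using mk by (simp add: sum_Omega_mult)
  also have "\<dots> = - Omega_app (\<lambda>l. F m l) k"
    by (cases "even m"; cases "even k") (auto simp: Omega_app_def F_def algebra_simps)
  also have "\<dots> = (\<Sum>l<2*S. F m l * Omega S $$ (l,k))"
    using mk by (simp add: sum_mult_Omega)
  also have "\<dots> = (unitary_reflection S w \<alpha> \<beta> * Omega S) $$ (m,k)"
    using mk by (simp add: F_def scalar_prod_def atLeast0LessThan unitary_reflection_def Omega_def)
  finally show "(Omega S * unitary_reflection S w \<alpha> \<beta>) $$ (m,k)
      = (unitary_reflection S w \<alpha> \<beta> * Omega S) $$ (m,k)" .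
qed (auto simp: Omega_def unitary_reflection_def)

lemma unitary_reflection_mult_vec:
  assumes "x \<in> carrier_vec (2*S)" and "m < 2*S"
  shows "(unitary_reflection S w \<alpha> \<beta> *\<^sub>v x) $ m = x $ m
    + w m * (\<alpha> * (\<Sum>k<2*S. w k * x $ k) - \<beta> * (\<Sum>k<2*S. Omega_app w k * x $ k))
    + Omega_app w m * (\<alpha> * (\<Sum>k<2*S. Omega_app w k * x $ k) + \<beta> * (\<Sum>k<2*S. w k * x $ k))"
proof -
  have "(unitary_reflection S w \<alpha> \<beta> *\<^sub>v x) $ m = (\<Sum>k<2*S. (if k = m then x $ k else 0)
      + w m * (\<alpha> * (w k * x $ k) - \<beta> * (Omega_app w k * x $ k))
      + Omega_app w m * (\<alpha> * (Omega_app w k * x $ k) + \<beta> * (w k * x $ k)))"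
    using assms by (simp add: unitary_reflection_def scalar_prod_def atLeast0LessThan)
      (intro sum.cong refl, auto simp: algebra_simps)
  then show ?thesis
    using assms(2) by (simp add: sum.distrib sum_subtractf sum_distrib_left[symmetric])
qed

lemma unitary_reflection_SpO:
  assumes "(\<Sum>l<2*S. w l * w l) * (\<alpha>\<^sup>2 + \<beta>\<^sup>2) = - 2 * \<alpha>"
  shows "unitary_reflection S w \<alpha> \<beta> \<in> SpO S"
  using assms
  by (intro SpO_if_orthogonal_commutes_Omega unitary_reflection_orthogonal
      unitary_reflection_commutes_Omega)

lemma unitary_reflection_mult_vec_eq:
  assumes "x \<in> carrier_vec (2*S)"
    and "\<alpha> * (\<Sum>k<2*S. w k * x $ k) - \<beta> * (\<Sum>k<2*S. Omega_app w k * x $ k) = -1"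
    and "\<alpha> * (\<Sum>k<2*S. Omega_app w k * x $ k) + \<beta> * (\<Sum>k<2*S. w k * x $ k) = 0"
  shows "unitary_reflection S w \<alpha> \<beta> *\<^sub>v x = vec (2*S) (\<lambda>m. x $ m - w m)"
proof (rule eq_vecI)
  fix m assume "m < dim_vec (vec (2*S) (\<lambda>m. x $ m - w m))"
  then show "(unitary_reflection S w \<alpha> \<beta> *\<^sub>v x) $ m = vec (2*S) (\<lambda>m. x $ m - w m) $ m"
    using unitary_reflection_mult_vec[OF assms(1), of m w \<alpha> \<beta>] assms(2,3) by simp
qed (simp add: unitary_reflection_def)

lemma SpO_transitive_on_sphere:
  assumes y: "y \<in> carrier_vec (2*S)" "y \<bullet> y = 1"
    and r: "r \<in> carrier_vec (2*S)" "r \<bullet> r = 1"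
  shows "\<exists>W \<in> SpO S. W *\<^sub>v y = r"
proof (cases "y = r")
  case True
  have "1\<^sub>m (2*S) \<in> SpO S"
    by (simp add: SpO_def orthogonal_mat_def Omega_def)
  then show ?thesis using True y by force
next
  case False
  define w where "w l = y $ l - r $ l" for l
  define d where "d = (\<Sum>l<2*S. w l * w l)"
  define p where "p = (\<Sum>l<2*S. w l * y $ l)"
  define q where "q = (\<Sum>l<2*S. Omega_app w l * y $ l)"
  define N where "N = p\<^sup>2 + q\<^sup>2"
  have "d - 2 * p = (\<Sum>l<2*S. r $ l * r $ l - y $ l * y $ l)"
    unfolding d_def p_def w_def
    by (simp add: sum_distrib_left sum_subtractf[symmetric] algebra_simps)
  also have "\<dots> = 0"
    using y r by (simp add: sum_subtractf scalar_prod_def atLeast0LessThan)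
  finally have d2p: "d = 2 * p" by simp
  obtain l0 where "l0 < 2*S" "w l0 \<noteq> 0"
    using False y r by (auto simp: w_def vec_eq_iff)
  have "0 < w l0 * w l0"
    using \<open>w l0 \<noteq> 0\<close> by (metis not_real_square_gt_zero)
  moreover have "w l0 * w l0 \<le> d"
    unfolding d_def using \<open>l0 < 2*S\<close> by (intro member_le_sum) auto
  ultimately have "0 < N" using d2p by (simp add: N_def add_pos_nonneg)
  text \<open>\<open>\<gamma> = \<alpha> + i\<beta> = -1/(p + iq)\<close> solves \<open>\<gamma> \<langle>w, y\<rangle> = -1\<close>, which makes the reflection send
    \<open>y\<close> to \<open>y - w = r\<close>.\<close>
  define \<alpha> where "\<alpha> = - p / N"
  define \<beta> where "\<beta> = q / N"
  have "\<alpha>\<^sup>2 + \<beta>\<^sup>2 = 1 / N"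
    using \<open>0 < N\<close> unfolding \<alpha>_def \<beta>_def N_def
    by (simp add: power_divide add_divide_distrib[symmetric] power2_eq_square)
  then have W: "unitary_reflection S w \<alpha> \<beta> \<in> SpO S"
    using d2p unfolding d_def by (intro unitary_reflection_SpO) (simp add: \<alpha>_def)
  have "\<alpha> * p - \<beta> * q = - N / N"
    unfolding \<alpha>_def \<beta>_def N_def
    by (simp add: power2_eq_square add_divide_distrib diff_divide_distrib)
  then have "\<alpha> * p - \<beta> * q = -1"
    using \<open>0 < N\<close> by simp
  moreover have "\<alpha> * q + \<beta> * p = 0"
    unfolding \<alpha>_def \<beta>_def by (simp add: algebra_simps add_divide_distrib[symmetric])
  ultimately have "unitary_reflection S w \<alpha> \<beta> *\<^sub>v y = r"
    using unitary_reflection_mult_vec_eq[OF y(1), of \<alpha> w \<beta>] r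
    unfolding p_def q_def by (auto simp: w_def)
  with W show ?thesis by blast
qed

lemma orthogonal_mat_rows_orthonormal:
  assumes "orthogonal_mat n Q" "l < n" "k < n"
  shows "row Q l \<bullet> row Q k = (if l = k then 1 else 0)"
proof -
  have Q: "Q \<in> carrier_mat n n" "transpose_mat Q * Q = 1\<^sub>m n"
    using assms(1) by (auto simp: orthogonal_mat_def)
  then have "Q * transpose_mat Q = 1\<^sub>m n"
    by (intro mat_mult_left_right_inverse[OF _ Q(1)]) (use Q in auto)
  from arg_cong[OF this, of "\<lambda>M. M $$ (l, k)"] show ?thesis
    using assms(2,3) Q(1) by simp
qed

definition unit_pair_vec :: "nat \<Rightarrow> nat \<Rightarrow> nat \<Rightarrow> real vec" where
  "unit_pair_vec n a b = vec n (\<lambda>l. if l = a \<or> l = b then 1 / sqrt 2 else 0)"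

lemma sum_mult_unit_pair_vec:
  assumes "a < n" "b < n" "a \<noteq> b"
  shows "(\<Sum>k<n. f k * unit_pair_vec n a b $ k) = (f a + f b) / sqrt 2"
proof -
  have "(\<Sum>k<n. f k * unit_pair_vec n a b $ k) = (\<Sum>k\<in>{a,b}. f k / sqrt 2)"
    using assms by (intro sum.mono_neutral_cong_right) (auto simp: unit_pair_vec_def)
  then show ?thesis using assms by (simp add: add_divide_distrib)
qed

lemma unit_pair_vec_norm:
  assumes "a < n" "b < n" "a \<noteq> b"
  shows "unit_pair_vec n a b \<bullet> unit_pair_vec n a b = 1"
proof -
  have "unit_pair_vec n a b \<bullet> unit_pair_vec n a b
      = (\<Sum>k<n. unit_pair_vec n a b $ k * unit_pair_vec n a b $ k)"
    by (simp add: scalar_prod_def atLeast0LessThan unit_pair_vec_def)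
  also have "\<dots> = (unit_pair_vec n a b $ a + unit_pair_vec n a b $ b) / sqrt 2"
    by (rule sum_mult_unit_pair_vec[OF assms])
  also have "\<dots> = 1"
    using assms by (simp add: unit_pair_vec_def)
  finally show ?thesis .
qed

lemma mult_mat_vec_unit_pair_vec:
  assumes "M \<in> carrier_mat m n" "l < m" "a < n" "b < n" "a \<noteq> b"
  shows "(M *\<^sub>v unit_pair_vec n a b) $ l = (M $$ (l, a) + M $$ (l, b)) / sqrt 2"
proof -
  have "(M *\<^sub>v unit_pair_vec n a b) $ l = (\<Sum>k<n. M $$ (l, k) * unit_pair_vec n a b $ k)"
    using assms(1,2) by (simp add: scalar_prod_def atLeast0LessThan unit_pair_vec_def)
  then show ?thesis using assms(3-5) by (simp add: sum_mult_unit_pair_vec)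
qed

theorem lemma1:
  fixes S i j :: nat and Q :: "real mat"
  assumes "orthogonal_mat (2*S) Q"
    and "1 \<le> i" "i \<le> S"
    and "1 \<le> j" "j \<le> 2*S"
  shows "\<exists>W \<in> SpO S. \<exists>c::real. c \<noteq> 0 \<and>
           (\<forall>l. 1 \<le> l \<and> l \<le> 2*S \<and> l \<noteq> j \<longrightarrow>
              (Q * W) $$ (l-1, 2*i-2) = c * (Q * W) $$ (l-1, 2*i-1))"
proof -
  define a b where "a = 2*i - 2" and "b = 2*i - 1"
  have ab: "a < 2*S" "b < 2*S" "a \<noteq> b" and j: "j - 1 < 2*S"
    using assms by (auto simp: a_def b_def)
  have Q: "Q \<in> carrier_mat (2*S) (2*S)"
    using assms(1) by (simp add: orthogonal_mat_def)
  have "unit_pair_vec (2*S) a b \<in> carrier_vec (2*S)" "row Q (j - 1) \<in> carrier_vec (2*S)"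
    using row_carrier[of Q] carrier_matD(2)[OF Q] by (simp_all add: unit_pair_vec_def)
  then obtain W where W: "W \<in> SpO S" "W *\<^sub>v unit_pair_vec (2*S) a b = row Q (j - 1)"
    using SpO_transitive_on_sphere unit_pair_vec_norm[OF ab]
      orthogonal_mat_rows_orthonormal[OF assms(1) j j] by (metis (no_types))
  then have Wc: "W \<in> carrier_mat (2*S) (2*S)" by (simp add: SpO_def orthogonal_mat_def)
  have "(Q * W) $$ (l, a) + (Q * W) $$ (l, b) = 0" if "l < 2*S" "l \<noteq> j - 1" for l
  proof -
    have "((Q * W) *\<^sub>v unit_pair_vec (2*S) a b) $ l = row Q l \<bullet> row Q (j - 1)"
      using Q Wc W that by (simp add: unit_pair_vec_def)
    also have "\<dots> = 0"
      using orthogonal_mat_rows_orthonormal[OF assms(1) that(1) j] that(2) by simp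
    finally show ?thesis
      using mult_mat_vec_unit_pair_vec[of "Q * W" "2*S" "2*S" l a b] ab that Q Wc by simp
  qed
  then show ?thesis
    using assms(4) unfolding a_def b_def
    by (intro bexI[OF _ W(1)] exI[of _ "-1"]) (auto simp: add_eq_0_iff)
qed

end
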